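(* For every pacing function $\mu:\Theta\to\mathbb{R}_{\ge0}$, every $(w,B)\in\Theta$ and every $t\ge 0$, $\sup_{b:A\to\mathbb{R}_{\ge0}}\Big\{\mathbb{E}_{\alpha,\{\theta_i\}_{i=1}^{n-1}}\big[(w^T\alpha-(1+t)b(\alpha))\mathbf 1\{b(\alpha)\ge\max(r(\alpha),\{\beta^\mu(\theta_i,\alpha)\}_i)\}\big]\Big\}+tB \;=\; q^\mu(w,B,t),$ where the supremum is over measurable $b$, $\alpha\sim F$ and $\theta_1,\dots,\theta_{n-1}\sim G$ i.i.d. independent of $\alpha$, and $q^\mu(w,B,t):=(1+t)\,\mathbb{E}_{\alpha\sim F}\Big[\mathbf 1\Big\{\frac{w^T\alpha}{1+t}\ge r(\alpha)\Big\}\int_{r(\alpha)}^{\frac{w^T\alpha}{1+t}}H^\mu_\alpha(s)\,ds\Big]+tB.$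
   Context: Setting. Fix integers $n\ge 2$ and $d\ge 2$, and constants $U>0$, $B_{\min}>0$. Buyer types are $\theta=(w,B)\in\Theta:=(0,U)^d\times(B_{\min},U)$; $\Theta_w:=(0,U)^d$. Item types are $\alpha\in A\subset\mathbb{R}^d_{+}$ (strictly positive orthant); all sets carry the Lebesgue $\sigma$-algebra. $F$ is a probability distribution on $A$ with a density and $G$ a probability distribution on $\Theta$ with a density. Buyer $(w,B)$ values item $\alpha$ at $w^T\alpha$; $\omega>0$ is a constant with $w^T\alpha\le\omega$ for all $w\in\Theta_w,\alpha\in A$. Reserve prices: measurable $r:A\to(0,\infty)$. A pacing function is a measurable $\mu:\Theta\to\mathbb{R}_{\ge0}$. For $\alpha\in A$, $\lambda^\mu_\alpha$ is the distribution of $w^T\alpha/(1+\mu(w,B))$ when $(w,B)\sim G$, and $H^\mu_\alpha$ the distribution of the maximum of $n-1$ i.i.d. draws from $\lambda^\mu_\alpha$; $H^\mu_\alpha(x):=\lambda^\mu_\alpha((-\infty,x])^{n-1}$. Define $\sigma^\mu_\alpha(x)=x$ if $x<r(\alpha)$; for $x\ge r(\alpha)$, $\sigma^\mu_\alpha(x)=x-\int_{r(\alpha)}^x \frac{H^\mu_\alpha(s)}{H^\mu_\alpha(x)}ds$ if $H^\mu_\alpha(x)>0$ and $\sigma^\mu_\alpha(x)=r(\alpha)$ if $H^\mu_\alpha(x)=0$. The value-pacing-based strategy is $\beta^\mu(w,B,\alpha):=\sigma^\mu_\alpha\big(w^T\alpha/(1+\mu(w,B))\big)$. *)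

theory Defs
  imports "HOL-Probability.Probability"
begin

definition Theta :: "real \<Rightarrow> real \<Rightarrow> ((real^'d) \<times> real) set" where
  "Theta U Bmin = {(w, B). (\<forall>i. 0 < w $ i \<and> w $ i < U) \<and> Bmin < B \<and> B < U}"

definition Theta_w :: "real \<Rightarrow> (real^'d) set" where
  "Theta_w U = {w. \<forall>i. 0 < w $ i \<and> w $ i < U}"

definition lam_cdf :: "((real^'d) \<times> real) measure \<Rightarrow> ((real^'d) \<times> real \<Rightarrow> real)
    \<Rightarrow> real^'d \<Rightarrow> real \<Rightarrow> real" where
  "lam_cdf G \<mu> \<alpha> x = measure G {\<theta> \<in> space G. (fst \<theta> \<bullet> \<alpha>) / (1 + \<mu> \<theta>) \<le> x}"

definition Hcdf :: "nat \<Rightarrow> ((real^'d) \<times> real) measure \<Rightarrow> ((real^'d) \<times> real \<Rightarrow> real)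
    \<Rightarrow> real^'d \<Rightarrow> real \<Rightarrow> real" where
  "Hcdf n G \<mu> \<alpha> x = (lam_cdf G \<mu> \<alpha> x) ^ (n - 1)"

definition sigma_fn :: "nat \<Rightarrow> ((real^'d) \<times> real) measure \<Rightarrow> (real^'d \<Rightarrow> real)
    \<Rightarrow> ((real^'d) \<times> real \<Rightarrow> real) \<Rightarrow> real^'d \<Rightarrow> real \<Rightarrow> real" where
  "sigma_fn n G r \<mu> \<alpha> x =
     (if x < r \<alpha> then x
      else if Hcdf n G \<mu> \<alpha> x > 0
        then x - integral {r \<alpha>..x} (\<lambda>s. Hcdf n G \<mu> \<alpha> s / Hcdf n G \<mu> \<alpha> x)
      else r \<alpha>)"

definition beta_fn :: "nat \<Rightarrow> ((real^'d) \<times> real) measure \<Rightarrow> (real^'d \<Rightarrow> real)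
    \<Rightarrow> ((real^'d) \<times> real \<Rightarrow> real) \<Rightarrow> (real^'d) \<times> real \<Rightarrow> real^'d \<Rightarrow> real" where
  "beta_fn n G r \<mu> \<theta> \<alpha> = sigma_fn n G r \<mu> \<alpha> ((fst \<theta> \<bullet> \<alpha>) / (1 + \<mu> \<theta>))"

definition exp_payoff :: "nat \<Rightarrow> (real^'d) measure \<Rightarrow> ((real^'d) \<times> real) measure
    \<Rightarrow> (real^'d \<Rightarrow> real) \<Rightarrow> ((real^'d) \<times> real \<Rightarrow> real) \<Rightarrow> real^'d \<Rightarrow> real
    \<Rightarrow> (real^'d \<Rightarrow> real) \<Rightarrow> real" where
  "exp_payoff n F G r \<mu> w t b =
     integral\<^sup>L (F \<Otimes>\<^sub>M PiM {..<n-1} (\<lambda>_. G))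
       (\<lambda>(\<alpha>, \<theta>s). (w \<bullet> \<alpha> - (1 + t) * b \<alpha>) *
          (if b \<alpha> \<ge> Max (insert (r \<alpha>) ((\<lambda>i. beta_fn n G r \<mu> (\<theta>s i) \<alpha>) ` {..<n-1}))
           then 1 else 0))"

definition q_fn :: "nat \<Rightarrow> (real^'d) measure \<Rightarrow> ((real^'d) \<times> real) measure
    \<Rightarrow> (real^'d \<Rightarrow> real) \<Rightarrow> ((real^'d) \<times> real \<Rightarrow> real) \<Rightarrow> real^'d \<Rightarrow> real \<Rightarrow> real \<Rightarrow> real" where
  "q_fn n F G r \<mu> w B t =
     (1 + t) * integral\<^sup>L F (\<lambda>\<alpha>. (if (w \<bullet> \<alpha>) / (1 + t) \<ge> r \<alpha>
          then integral {r \<alpha>..(w \<bullet> \<alpha>) / (1 + t)} (\<lambda>s. Hcdf n G \<mu> \<alpha> s) else 0)) + t * B"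

end

theory Submission
  imports Defs
begin

text \<open>Fix the item \<open>\<alpha>\<close> and let \<open>H\<close> be the distribution function of the highest of the
  \<open>n - 1\<close> rival paced values. The shading map \<open>\<sigma>(x) = x - \<integral>\<^sub>r\<^sup>x H / H(x)\<close> is monotone and
  satisfies \<open>(v - c) H(z) \<le> \<integral>\<^sub>r\<^sup>v H\<close> whenever \<open>\<sigma>(z) \<le> c\<close> and \<open>r \<le> c \<le> v\<close>, with equality for
  \<open>z = v\<close>, \<open>c = \<sigma>(v)\<close>. Since the rivals bid \<open>\<sigma>\<close> of their values, a bid \<open>c \<ge> r\<close> wins with
  probability \<open>P(\<sigma>(X) \<le> c)\<^sup>n\<^sup>-\<^sup>1\<close>, and the sublevel set \<open>\<sigma>(X) \<le> c\<close> is of the form \<open>X \<le> s\<close> or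
  \<open>X < s\<close>; approximating from below shows that no bid earns more than \<open>\<integral>\<^sub>r\<^sup>v H\<close> for the value
  \<open>v = w\<^sup>T\<alpha>/(1+t)\<close>, while the bid \<open>\<sigma>(v)\<close> earns exactly that. Integrating over \<open>\<alpha>\<close> by
  Fubini gives the supremum.\<close>

definition shade :: "(real \<Rightarrow> real) \<Rightarrow> real \<Rightarrow> real \<Rightarrow> real" where
  "shade H r x = (if x < r then x else if H x > 0 then x - integral {r..x} (\<lambda>s. H s / H x) else r)"

lemma mono_integrable_on: "mono (H :: real \<Rightarrow> real) \<Longrightarrow> H integrable_on {a..b}"
  by (rule integrable_on_mono_on) (simp add: mono_on_def monoD)

lemma mono_integral_le:
  assumes "mono (H :: real \<Rightarrow> real)" "a \<le> b"
  shows "integral {a..b} H \<le> (b - a) * H b"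
proof -
  have "integral {a..b} H \<le> integral {a..b} (\<lambda>_. H b)"
    using assms by (intro integral_le) (auto simp: mono_integrable_on monoD)
  then show ?thesis using assms by simp
qed

lemma mono_integral_ge:
  assumes "mono (H :: real \<Rightarrow> real)" "a \<le> b"
  shows "(b - a) * H a \<le> integral {a..b} H"
proof -
  have "integral {a..b} (\<lambda>_. H a) \<le> integral {a..b} H"
    using assms by (intro integral_le) (auto simp: mono_integrable_on monoD)
  then show ?thesis using assms by simp
qed

lemma mono_integral_combine:
  "mono (H :: real \<Rightarrow> real) \<Longrightarrow> a \<le> b \<Longrightarrow> b \<le> c
    \<Longrightarrow> integral {a..c} H = integral {a..b} H + integral {b..c} H"
  by (simp add: Henstock_Kurzweil_Integration.integral_combine mono_integrable_on)

locale shading =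
  fixes H :: "real \<Rightarrow> real"
  assumes mono_H: "mono H" and H_nonneg: "\<And>s. 0 \<le> H s"
begin

lemma integral_H_nonneg: "0 \<le> integral {a..b} H"
  by (simp add: integral_nonneg mono_integrable_on mono_H H_nonneg)

lemma shade_eq: "r \<le> x \<Longrightarrow> 0 < H x \<Longrightarrow> shade H r x = x - integral {r..x} H / H x"
  by (simp add: shade_def)

lemma shade_le: "shade H r x \<le> x"
  using integral_H_nonneg by (auto simp: shade_def divide_nonneg_pos)

lemma shade_ge:
  assumes "r \<le> x" shows "r \<le> shade H r x"
proof (cases "0 < H x")
  case True
  have "integral {r..x} H \<le> (x - r) * H x" by (rule mono_integral_le[OF mono_H assms])
  then have "integral {r..x} H / H x \<le> x - r" using True by (simp add: divide_le_eq)
  then show ?thesis using True assms by (simp add: shade_eq)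
qed (use assms in \<open>auto simp: shade_def\<close>)

lemma mono_shade: "mono (shade H r)"
proof
  fix x y :: real assume "x \<le> y"
  consider "y < r" | "x < r" "r \<le> y" | "r \<le> x" "H x \<le> 0" | "r \<le> x" "0 < H x" by linarith
  then show "shade H r x \<le> shade H r y"
  proof cases
    case 1
    then show ?thesis using \<open>x \<le> y\<close> by (simp add: shade_def)
  next
    case 2
    then have "shade H r x = x" by (simp add: shade_def)
    then show ?thesis using 2 shade_ge[of r y] by simp
  next
    case 3
    then have "shade H r x = r" by (simp add: shade_def)
    then show ?thesis using 3 shade_ge[of r y] \<open>x \<le> y\<close> by simp
  next
    case 4
    have "H x \<le> H y" using mono_H \<open>x \<le> y\<close> by (rule monoD)
    with 4 have Hy: "0 < H y" by simp
    have "integral {r..y} H = integral {r..x} H + integral {x..y} H"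
      using 4 \<open>x \<le> y\<close> by (intro mono_integral_combine[OF mono_H])
    moreover have "integral {x..y} H / H y \<le> y - x"
      unfolding pos_divide_le_eq[OF Hy] by (rule mono_integral_le[OF mono_H \<open>x \<le> y\<close>])
    moreover have "integral {r..x} H / H y \<le> integral {r..x} H / H x"
      using 4 \<open>H x \<le> H y\<close> integral_H_nonneg
      by (intro divide_left_mono) auto
    ultimately have "integral {r..y} H / H y \<le> integral {r..x} H / H x + (y - x)"
      by (simp add: add_divide_distrib)
    then show ?thesis using 4 Hy \<open>x \<le> y\<close> by (simp add: shade_eq)
  qed
qed

lemma shade_le_imp_surplus_le:
  assumes "shade H r z \<le> c" "r \<le> c" "c \<le> v"
  shows "(v - c) * H z \<le> integral {r..v} H"
proof -
  consider "z < r" | "r \<le> z" "H z \<le> 0" | "r \<le> z" "0 < H z" by linarith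
  then show ?thesis
  proof cases
    case 1
    have "(v - c) * H z \<le> (v - r) * H r"
      using 1 assms H_nonneg monoD[OF mono_H, of z r] by (intro mult_mono) auto
    also have "\<dots> \<le> integral {r..v} H" using assms by (intro mono_integral_ge[OF mono_H]) auto
    finally show ?thesis .
  next
    case 2
    then show ?thesis using H_nonneg[of z] integral_H_nonneg by simp
  next
    case 3
    have "(v - c) * H z \<le> (v - shade H r z) * H z"
      using assms 3 by (intro mult_right_mono) auto
    also have "\<dots> = (v - z) * H z + integral {r..z} H" using 3 by (simp add: shade_eq field_simps)
    also have "\<dots> \<le> integral {r..v} H"
    proof (cases "z \<le> v")
      case True
      have "integral {r..v} H = integral {r..z} H + integral {z..v} H"
        using 3 True by (intro mono_integral_combine[OF mono_H])
      then show ?thesis using mono_integral_ge[OF mono_H True] by linarith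
    next
      case False
      have "integral {r..z} H = integral {r..v} H + integral {v..z} H"
        using assms False by (intro mono_integral_combine[OF mono_H]) auto
      moreover have "integral {v..z} H \<le> (z - v) * H z"
        using False by (intro mono_integral_le[OF mono_H]) auto
      moreover have "(z - v) * H z = - ((v - z) * H z)" by (simp add: algebra_simps)
      ultimately show ?thesis by linarith
    qed
    finally show ?thesis .
  qed
qed

lemma surplus_shade:
  assumes "r \<le> v" shows "(v - shade H r v) * H v = integral {r..v} H"
proof (cases "0 < H v")
  case True
  then show ?thesis using assms by (simp add: shade_eq)
next
  case False
  then have "H v = 0" using H_nonneg[of v] by linarith
  moreover have "integral {r..v} H \<le> (v - r) * H v" by (rule mono_integral_le[OF mono_H assms])
  moreover have "0 \<le> integral {r..v} H" by (rule integral_H_nonneg)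
  ultimately show ?thesis by simp
qed

end

lemma mono_sublevel_cases:
  fixes \<sigma> :: "real \<Rightarrow> 'b::linorder"
  assumes "mono \<sigma>"
  obtains "{z. \<sigma> z \<le> c} = {}" | "{z. \<sigma> z \<le> c} = UNIV"
    | s where "{z. \<sigma> z \<le> c} = {..s}" | s where "{z. \<sigma> z \<le> c} = {..<s}"
proof -
  define D where "D = {z. \<sigma> z \<le> c}"
  have down: "y \<in> D" if "z \<in> D" "y \<le> z" for y z
    using that monoD[OF assms] unfolding D_def by (blast intro: order_trans)
  consider "D = {}" | "\<not> bdd_above D" | "D \<noteq> {}" "bdd_above D" "Sup D \<in> D"
    | "D \<noteq> {}" "bdd_above D" "Sup D \<notin> D" by blast
  then show ?thesis
  proof cases
    case 2
    have "z \<in> D" for z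
      using 2 down unfolding bdd_above_def by (meson linear)
    then show ?thesis using that(2) unfolding D_def by blast
  next
    case 3
    have "D = {..Sup D}" using 3 down by (auto intro: cSup_upper)
    then show ?thesis using that(3) unfolding D_def by blast
  next
    case 4
    have "D = {..<Sup D}"
    proof (intro set_eqI iffI)
      fix z assume "z \<in> D"
      then show "z \<in> {..<Sup D}" using 4 cSup_upper[of z D] by (cases "z = Sup D") auto
    next
      fix z assume "z \<in> {..<Sup D}"
      then obtain y where "y \<in> D" "z < y" using 4 less_cSup_iff[of D z] by auto
      then show "z \<in> D" using down by auto
    qed
    then show ?thesis using that(4) unfolding D_def by blast
  qed (use that(1) D_def in blast)
qed

text \<open>Since \<open>\<sigma>\<close> is monotone, the event \<open>\<sigma> X \<le> c\<close> is \<open>X \<le> s\<close> or \<open>X < s\<close> for some threshold \<open>s\<close>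
  (or trivial), so its probability is a value or a left limit of the distribution function of \<open>X\<close>.\<close>
lemma (in prob_space) mono_comp_prob_bound:
  fixes X :: "'a \<Rightarrow> real" and \<sigma> \<phi> :: "real \<Rightarrow> real"
  assumes X: "random_variable borel X" and "mono \<sigma>" and "continuous_on UNIV \<phi>" and "\<phi> 0 \<le> K"
    and bound: "\<And>z. \<sigma> z \<le> c \<Longrightarrow> \<phi> (prob {x \<in> space M. X x \<le> z}) \<le> K"
  shows "\<phi> (prob {x \<in> space M. \<sigma> (X x) \<le> c}) \<le> K"
proof -
  let ?N = "distr M borel X"
  interpret N: real_distribution ?N using X by simp
  have measure_N: "measure ?N S = prob {x \<in> space M. X x \<in> S}" if "S \<in> sets borel" for S
    using that X by (simp add: measure_distr vimage_def Int_def conj_commute)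
  have cdf_eq: "cdf ?N z = prob {x \<in> space M. X x \<le> z}" for z
    by (simp add: cdf_def measure_N)
  have phi_lim: "((\<lambda>z. \<phi> (cdf ?N z)) \<longlongrightarrow> \<phi> L) F" if "(cdf ?N \<longlongrightarrow> L) F" for L F
    using continuous_on_tendsto_compose[OF assms(3) that] by simp
  have event: "{x \<in> space M. \<sigma> (X x) \<le> c} = {x \<in> space M. X x \<in> {z. \<sigma> z \<le> c}}" by simp
  from \<open>mono \<sigma>\<close> show ?thesis
  proof (cases rule: mono_sublevel_cases[where c=c])
    case 1
    then show ?thesis unfolding event using assms(4) by simp
  next
    case 2
    then have "\<phi> (cdf ?N z) \<le> K" for z using bound by (auto simp: cdf_eq)
    then have "\<phi> 1 \<le> K"
      using phi_lim[OF N.cdf_lim_at_top_prob] by (intro tendsto_upperbound[where F=at_top]) auto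
    then show ?thesis unfolding event 2 using prob_space by simp
  next
    case (3 s)
    then have "\<sigma> s \<le> c" by blast
    then show ?thesis unfolding event 3 using bound by simp
  next
    case (4 s)
    have "\<forall>\<^sub>F z in at_left s. \<phi> (cdf ?N z) \<le> K"
      using eventually_at_left_real[of "s - 1" s, simplified] by eventually_elim (use 4 bound in \<open>auto simp: cdf_eq\<close>)
    then have "\<phi> (measure ?N {..<s}) \<le> K"
      using phi_lim[OF N.cdf_at_left] by (intro tendsto_upperbound) auto
    then show ?thesis unfolding event 4 by (simp add: measure_N)
  qed
qed

text \<open>For bounded \<open>h\<close> the gauge integral is a Lebesgue integral against \<open>lborel\<close>, which is
  measurable in its parameters.\<close>
lemma borel_measurable_integral_atLeastAtMost:
  fixes h :: "'a \<Rightarrow> real \<Rightarrow> real" and a :: "'a \<Rightarrow> real"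
  assumes h[measurable]: "(\<lambda>p. h (fst p) (snd p)) \<in> borel_measurable (N \<Otimes>\<^sub>M borel)"
    and bounded: "\<And>x s. \<bar>h x s\<bar> \<le> C" and a[measurable]: "a \<in> borel_measurable N"
  shows "(\<lambda>p. integral {a (fst p)..snd p} (h (fst p))) \<in> borel_measurable (N \<Otimes>\<^sub>M borel)"
proof -
  have eq: "integral {a x..y} (h x) = (\<integral>s. indicator {a x..y} s * h x s \<partial>lborel)"
    if "x \<in> space N" for x y
  proof -
    have [measurable]: "h x \<in> borel_measurable borel" using measurable_Pair2[OF h that] by simp
    have "set_integrable lborel {a x..y} (h x)"
      unfolding set_integrable_def using bounded
      by (intro integrableI_bounded_set[where A="{a x..y}" and B=C])
         (auto simp: emeasure_lborel_Icc_eq indicator_def)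
    from set_borel_integral_eq_integral(2)[OF this] show ?thesis
      by (simp add: set_lebesgue_integral_def)
  qed
  have "(\<lambda>p. \<integral>s. indicator {a (fst p)..snd p} s * h (fst p) s \<partial>lborel)
      \<in> borel_measurable (N \<Otimes>\<^sub>M borel)"
  proof (rule lborel.borel_measurable_lebesgue_integral)
    have "(\<lambda>q. (fst (fst q), snd q)) \<in> (N \<Otimes>\<^sub>M borel) \<Otimes>\<^sub>M borel \<rightarrow>\<^sub>M N \<Otimes>\<^sub>M borel"
      by measurable
    from measurable_compose[OF this h]
    have [measurable]: "(\<lambda>q. h (fst (fst q)) (snd q)) \<in> borel_measurable ((N \<Otimes>\<^sub>M borel) \<Otimes>\<^sub>M lborel)"
      by (simp add: measurable_cong_sets[OF sets_pair_measure_cong[OF refl sets_lborel] refl])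
    have "(\<lambda>q. (if a (fst (fst q)) \<le> snd q \<and> snd q \<le> snd (fst q) then 1 else 0) * h (fst (fst q)) (snd q))
        \<in> borel_measurable ((N \<Otimes>\<^sub>M borel) \<Otimes>\<^sub>M lborel)"
      by measurable
    then show "(\<lambda>(p, s). indicator {a (fst p)..snd p} s * h (fst p) s) \<in> borel_measurable ((N \<Otimes>\<^sub>M borel) \<Otimes>\<^sub>M lborel)"
      by (simp add: indicator_def split_beta')
  qed
  then show ?thesis
    by (rule measurable_cong[THEN iffD1, rotated]) (auto simp: space_pair_measure eq)
qed

lemma (in prob_space) integral_PiM_Max_le:
  fixes Y :: "'a \<Rightarrow> real"
  assumes "finite I" and Y: "random_variable borel Y"
  shows "(\<integral>ys. (if Max (insert a ((\<lambda>i. Y (ys i)) ` I)) \<le> c then 1 else 0) \<partial>PiM I (\<lambda>_. M))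
    = (if a \<le> c then prob {x \<in> space M. Y x \<le> c} ^ card I else 0)"
proof -
  interpret product: finite_product_prob_space "\<lambda>_. M" I using \<open>finite I\<close> by unfold_locales
  let ?S = "{x \<in> space M. Y x \<le> c}"
  let ?E = "if a \<le> c then PiE I (\<lambda>_. ?S) else {}"
  have sets_S: "?S \<in> sets M" using Y by measurable
  have "(\<integral>ys. (if Max (insert a ((\<lambda>i. Y (ys i)) ` I)) \<le> c then 1 else 0) \<partial>PiM I (\<lambda>_. M))
      = (\<integral>ys. indicator ?E ys \<partial>PiM I (\<lambda>_. M))"
    using \<open>finite I\<close>
    by (intro Bochner_Integration.integral_cong) (auto simp: space_PiM PiE_def indicator_def)
  also have "\<dots> = measure (PiM I (\<lambda>_. M)) ?E"
    using sets.sets_into_space[OF sets_PiM_I_finite[OF \<open>finite I\<close>, of "\<lambda>_. ?S" "\<lambda>_. M"]] sets_S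
    by (simp add: Int_absorb2)
  also have "measure (PiM I (\<lambda>_. M)) (PiE I (\<lambda>_. ?S)) = (\<Prod>i\<in>I. prob ?S)"
    using sets_S by (intro product.finite_measure_PiM_emb)
  ultimately show ?thesis by simp
qed

lemma (in pair_sigma_finite) integrable_bounded_by_fst:
  fixes f :: "'a \<times> 'b \<Rightarrow> real"
  assumes "finite_measure M2" and f: "f \<in> borel_measurable (M1 \<Otimes>\<^sub>M M2)" and g: "integrable M1 g"
    and bound: "\<And>x y. x \<in> space M1 \<Longrightarrow> y \<in> space M2 \<Longrightarrow> \<bar>f (x, y)\<bar> \<le> g x"
  shows "integrable (M1 \<Otimes>\<^sub>M M2) f"
proof (rule Bochner_Integration.integrable_bound)
  interpret M2: finite_measure M2 by fact
  have [measurable]: "g \<in> borel_measurable M1" using g by (rule borel_measurable_integrable)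
  show "integrable (M1 \<Otimes>\<^sub>M M2) (\<lambda>p. g (fst p))"
  proof (rule Fubini_integrable)
    show "integrable M1 (\<lambda>x. \<integral>y. norm (g (fst (x, y))) \<partial>M2)"
      using g by simp
  qed (use g in auto)
  show "AE p in M1 \<Otimes>\<^sub>M M2. norm (f p) \<le> norm (g (fst p))"
    using bound by (intro AE_I2) (fastforce simp: space_pair_measure)
qed (rule f)

definition paced_value :: "((real^'d) \<times> real \<Rightarrow> real) \<Rightarrow> (real^'d) \<times> real \<Rightarrow> real^'d \<Rightarrow> real" where
  "paced_value \<mu> \<theta> \<alpha> = (fst \<theta> \<bullet> \<alpha>) / (1 + \<mu> \<theta>)"

lemma lam_cdf_eq: "lam_cdf G \<mu> \<alpha> x = measure G {\<theta> \<in> space G. paced_value \<mu> \<theta> \<alpha> \<le> x}"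
  by (simp add: lam_cdf_def paced_value_def)

lemma sigma_fn_eq_shade: "sigma_fn n G r \<mu> \<alpha> = shade (Hcdf n G \<mu> \<alpha>) (r \<alpha>)"
  by (simp add: fun_eq_iff sigma_fn_def shade_def)

lemma beta_fn_eq_shade: "beta_fn n G r \<mu> \<theta> \<alpha> = shade (Hcdf n G \<mu> \<alpha>) (r \<alpha>) (paced_value \<mu> \<theta> \<alpha>)"
  by (simp add: beta_fn_def sigma_fn_eq_shade paced_value_def)

lemma borel_measurable_lebesgue_continuous:
  "continuous_on UNIV (f :: 'a::euclidean_space \<Rightarrow> 'b::euclidean_space) \<Longrightarrow> f \<in> borel_measurable lebesgue"
  by (rule measurable_completion) (simp add: borel_measurable_continuous_onI)

locale paced_auction = F: prob_space F + G: prob_space G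
  for F :: "(real^'d) measure" and G :: "((real^'d) \<times> real) measure" +
  fixes n :: nat and r :: "real^'d \<Rightarrow> real" and \<mu> :: "(real^'d) \<times> real \<Rightarrow> real"
  assumes two_le_n: "2 \<le> n" and sets_F: "sets F = sets lebesgue" and sets_G: "sets G = sets lebesgue"
    and r_lebesgue: "r \<in> borel_measurable lebesgue" and mu_lebesgue: "\<mu> \<in> borel_measurable lebesgue"
begin

lemma measurable_F_id[measurable]: "(\<lambda>\<alpha>. \<alpha>) \<in> borel_measurable F"
  by (subst measurable_cong_sets[OF sets_F refl])
     (rule borel_measurable_lebesgue_continuous[OF continuous_on_id])

lemma measurable_G_fst[measurable]: "fst \<in> borel_measurable G"
  by (subst measurable_cong_sets[OF sets_G refl])
     (rule borel_measurable_lebesgue_continuous[OF continuous_on_fst[OF continuous_on_id]])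

lemma measurable_r[measurable]: "r \<in> borel_measurable F"
  by (subst measurable_cong_sets[OF sets_F refl]) (rule r_lebesgue)

lemma measurable_mu[measurable]: "\<mu> \<in> borel_measurable G"
  by (subst measurable_cong_sets[OF sets_G refl]) (rule mu_lebesgue)

lemma measurable_paced_value[measurable]:
  "(\<lambda>p. paced_value \<mu> (snd p) (fst p)) \<in> borel_measurable (F \<Otimes>\<^sub>M G)"
  unfolding paced_value_def by measurable

lemma space_F: "space F = UNIV"
  using sets_eq_imp_space_eq[OF sets_F] by simp

lemma random_variable_paced_value: "(\<lambda>\<theta>. paced_value \<mu> \<theta> \<alpha>) \<in> borel_measurable G"
  using measurable_Pair2[OF measurable_paced_value, of \<alpha>] by (simp add: space_F)

lemma Hcdf_eq: "Hcdf n G \<mu> \<alpha> x = G.prob {\<theta> \<in> space G. paced_value \<mu> \<theta> \<alpha> \<le> x} ^ (n - 1)"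
  by (simp add: Hcdf_def lam_cdf_eq)

lemma shading_Hcdf: "shading (Hcdf n G \<mu> \<alpha>)"
proof
  show "mono (Hcdf n G \<mu> \<alpha>)"
    unfolding mono_def Hcdf_eq using random_variable_paced_value[of \<alpha>]
    by (auto intro!: power_mono G.finite_measure_mono)
qed (simp add: Hcdf_eq)

lemma measurable_lam_cdf[measurable]:
  "(\<lambda>p. lam_cdf G \<mu> (fst p) (snd p)) \<in> borel_measurable (F \<Otimes>\<^sub>M borel)"
proof -
  have "{q \<in> space ((F \<Otimes>\<^sub>M borel) \<Otimes>\<^sub>M G). paced_value \<mu> (snd q) (fst (fst q)) \<le> snd (fst q)}
      \<in> sets ((F \<Otimes>\<^sub>M borel) \<Otimes>\<^sub>M G)"
    unfolding paced_value_def by measurable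
  from G.measurable_emeasure_Pair[OF this]
  have "(\<lambda>p. measure G {\<theta> \<in> space G. paced_value \<mu> \<theta> (fst p) \<le> snd p}) \<in> borel_measurable (F \<Otimes>\<^sub>M borel)"
    unfolding measure_def by (simp add: vimage_def space_pair_measure space_F)
  then show ?thesis by (simp add: lam_cdf_eq)
qed

lemma measurable_Hcdf[measurable]:
  "(\<lambda>p. Hcdf n G \<mu> (fst p) (snd p)) \<in> borel_measurable (F \<Otimes>\<^sub>M borel)"
  unfolding Hcdf_def by measurable

lemma measurable_integral_Hcdf[measurable]:
  "(\<lambda>p. integral {r (fst p)..snd p} (Hcdf n G \<mu> (fst p))) \<in> borel_measurable (F \<Otimes>\<^sub>M borel)"
  by (rule borel_measurable_integral_atLeastAtMost[where C=1])
     (auto simp: Hcdf_def lam_cdf_def power_le_one)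

lemma measurable_sigma_fn[measurable]:
  "(\<lambda>p. sigma_fn n G r \<mu> (fst p) (snd p)) \<in> borel_measurable (F \<Otimes>\<^sub>M borel)"
  unfolding sigma_fn_eq_shade shade_def integral_divide by measurable

lemma measurable_beta_fn[measurable]:
  "(\<lambda>p. beta_fn n G r \<mu> (snd p) (fst p)) \<in> borel_measurable (F \<Otimes>\<^sub>M G)"
proof -
  have "(\<lambda>p. (fst p, paced_value \<mu> (snd p) (fst p))) \<in> F \<Otimes>\<^sub>M G \<rightarrow>\<^sub>M F \<Otimes>\<^sub>M borel"
    by measurable
  from measurable_compose[OF this measurable_sigma_fn] show ?thesis
    by (simp add: beta_fn_def paced_value_def)
qed

lemma random_variable_beta_fn: "(\<lambda>\<theta>. beta_fn n G r \<mu> \<theta> \<alpha>) \<in> borel_measurable G"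
  using measurable_Pair2[OF measurable_beta_fn, of \<alpha>] by (simp add: space_F)

abbreviation opponents :: "(nat \<Rightarrow> (real^'d) \<times> real) measure" where
  "opponents \<equiv> PiM {..<n - 1} (\<lambda>_. G)"

definition win_prob :: "real^'d \<Rightarrow> real \<Rightarrow> real" where
  "win_prob \<alpha> c = (if r \<alpha> \<le> c then G.prob {\<theta> \<in> space G. beta_fn n G r \<mu> \<theta> \<alpha> \<le> c} ^ (n - 1) else 0)"

definition rent :: "real^'d \<Rightarrow> real \<Rightarrow> real" where
  "rent \<alpha> v = (if r \<alpha> \<le> v then integral {r \<alpha>..v} (Hcdf n G \<mu> \<alpha>) else 0)"

lemma win_prob_nonneg: "0 \<le> win_prob \<alpha> c"
  by (simp add: win_prob_def)

lemma rent_nonneg: "0 \<le> rent \<alpha> v"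
  using shading.integral_H_nonneg[OF shading_Hcdf] by (simp add: rent_def)

lemma integral_opponents:
  "(\<integral>\<theta>s. K * (if c \<ge> Max (insert (r \<alpha>) ((\<lambda>i. beta_fn n G r \<mu> (\<theta>s i) \<alpha>) ` {..<n - 1})) then 1 else 0)
     \<partial>opponents) = K * win_prob \<alpha> c"
proof -
  have "(\<integral>\<theta>s. (if c \<ge> Max (insert (r \<alpha>) ((\<lambda>i. beta_fn n G r \<mu> (\<theta>s i) \<alpha>) ` {..<n - 1})) then 1 else 0)
      \<partial>opponents) = win_prob \<alpha> c"
    unfolding win_prob_def G.integral_PiM_Max_le[OF finite_lessThan random_variable_beta_fn] by simp
  then show ?thesis by (simp only: integral_mult_right_zero)
qed

lemma surplus_le_rent: "(v - c) * win_prob \<alpha> c \<le> rent \<alpha> v"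
proof (cases "r \<alpha> \<le> c \<and> c \<le> v")
  case False
  then have "(v - c) * win_prob \<alpha> c \<le> 0"
    using win_prob_nonneg[of \<alpha> c] by (auto simp: win_prob_def mult_nonpos_nonneg)
  then show ?thesis using rent_nonneg[of \<alpha> v] by linarith
next
  case True
  interpret shading "Hcdf n G \<mu> \<alpha>" by (rule shading_Hcdf)
  have "(v - c) * G.prob {\<theta> \<in> space G. shade (Hcdf n G \<mu> \<alpha>) (r \<alpha>) (paced_value \<mu> \<theta> \<alpha>) \<le> c} ^ (n - 1)
      \<le> integral {r \<alpha>..v} (Hcdf n G \<mu> \<alpha>)"
  proof (rule G.mono_comp_prob_bound[where \<phi>="\<lambda>p. (v - c) * p ^ (n - 1)"
        and \<sigma>="shade (Hcdf n G \<mu> \<alpha>) (r \<alpha>)" and X="\<lambda>\<theta>. paced_value \<mu> \<theta> \<alpha>"])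
    show "(\<lambda>\<theta>. paced_value \<mu> \<theta> \<alpha>) \<in> borel_measurable G" by (rule random_variable_paced_value)
    show "continuous_on UNIV (\<lambda>p. (v - c) * p ^ (n - 1))" by (intro continuous_intros)
    show "(v - c) * 0 ^ (n - 1) \<le> integral {r \<alpha>..v} (Hcdf n G \<mu> \<alpha>)"
      using two_le_n integral_H_nonneg by (simp add: zero_power)
    show "(v - c) * G.prob {\<theta> \<in> space G. paced_value \<mu> \<theta> \<alpha> \<le> z} ^ (n - 1)
        \<le> integral {r \<alpha>..v} (Hcdf n G \<mu> \<alpha>)" if "shade (Hcdf n G \<mu> \<alpha>) (r \<alpha>) z \<le> c" for z
      using shade_le_imp_surplus_le[OF that] True by (simp add: Hcdf_eq)
  qed (rule mono_shade)
  then show ?thesis using True by (simp add: win_prob_def rent_def beta_fn_eq_shade)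
qed

lemma rent_le_surplus_sigma_fn:
  assumes "r \<alpha> \<le> v"
  shows "rent \<alpha> v \<le> (v - sigma_fn n G r \<mu> \<alpha> v) * win_prob \<alpha> (sigma_fn n G r \<mu> \<alpha> v)"
proof -
  interpret shading "Hcdf n G \<mu> \<alpha>" by (rule shading_Hcdf)
  define c where "c = shade (Hcdf n G \<mu> \<alpha>) (r \<alpha>) v"
  have "r \<alpha> \<le> c" "c \<le> v" unfolding c_def using assms by (auto intro: shade_ge shade_le)
  have "{\<theta> \<in> space G. paced_value \<mu> \<theta> \<alpha> \<le> v} \<subseteq> {\<theta> \<in> space G. beta_fn n G r \<mu> \<theta> \<alpha> \<le> c}"
    unfolding c_def beta_fn_eq_shade using mono_shade by (auto dest: monoD)
  then have "Hcdf n G \<mu> \<alpha> v \<le> G.prob {\<theta> \<in> space G. beta_fn n G r \<mu> \<theta> \<alpha> \<le> c} ^ (n - 1)"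
    unfolding Hcdf_eq using random_variable_beta_fn[of \<alpha>]
    by (intro power_mono G.finite_measure_mono) auto
  then have "(v - c) * Hcdf n G \<mu> \<alpha> v \<le> (v - c) * win_prob \<alpha> c"
    using \<open>r \<alpha> \<le> c\<close> \<open>c \<le> v\<close> by (intro mult_left_mono) (auto simp: win_prob_def)
  moreover have "(v - c) * Hcdf n G \<mu> \<alpha> v = rent \<alpha> v"
    unfolding c_def using surplus_shade[OF assms] assms by (simp add: rent_def)
  ultimately show ?thesis by (simp add: c_def sigma_fn_eq_shade)
qed

lemma measurable_price_to_beat[measurable]:
  "(\<lambda>p. Max (insert (r (fst p)) ((\<lambda>i. beta_fn n G r \<mu> (snd p i) (fst p)) ` {..<n - 1})))
    \<in> borel_measurable (F \<Otimes>\<^sub>M opponents)"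
proof -
  have [measurable]: "(\<lambda>p. beta_fn n G r \<mu> (snd p i) (fst p)) \<in> borel_measurable (F \<Otimes>\<^sub>M opponents)"
    if "i \<in> {..<n - 1}" for i
  proof -
    have "(\<lambda>p. (fst p, snd p i)) \<in> F \<Otimes>\<^sub>M opponents \<rightarrow>\<^sub>M F \<Otimes>\<^sub>M G"
      using that by measurable
    from measurable_compose[OF this measurable_beta_fn] show ?thesis by simp
  qed
  have "{..<n - 1} \<noteq> {}" using two_le_n by (simp add: lessThan_empty_iff)
  then have "Max (insert a (f ` {..<n - 1})) = max a (Max (f ` {..<n - 1}))" for a and f :: "nat \<Rightarrow> real"
    by (intro Max_insert) auto
  then show ?thesis by (simp only:) measurable
qed

text \<open>The guard \<open>0 \<le> r \<alpha>\<close> only matters off the support of \<open>F\<close>, where it keeps the bid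
  nonnegative.\<close>
definition paced_bid :: "real^'d \<Rightarrow> real \<Rightarrow> real^'d \<Rightarrow> real" where
  "paced_bid w t \<alpha> =
     (if 0 \<le> r \<alpha> \<and> r \<alpha> \<le> w \<bullet> \<alpha> / (1 + t) then sigma_fn n G r \<mu> \<alpha> (w \<bullet> \<alpha> / (1 + t)) else 0)"

lemma paced_bid_nonneg: "0 \<le> paced_bid w t \<alpha>"
  using shading.shade_ge[OF shading_Hcdf, of "r \<alpha>" "w \<bullet> \<alpha> / (1 + t)" \<alpha>]
  by (auto simp: paced_bid_def sigma_fn_eq_shade)

lemma measurable_paced_bid[measurable]: "paced_bid w t \<in> borel_measurable F"
proof -
  have "(\<lambda>\<alpha>. (\<alpha>, w \<bullet> \<alpha> / (1 + t))) \<in> F \<rightarrow>\<^sub>M F \<Otimes>\<^sub>M borel" by measurable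
  from measurable_compose[OF this measurable_sigma_fn]
  have [measurable]: "(\<lambda>\<alpha>. sigma_fn n G r \<mu> \<alpha> (w \<bullet> \<alpha> / (1 + t))) \<in> borel_measurable F" by simp
  show ?thesis unfolding paced_bid_def by measurable
qed

lemma surplus_paced_bid:
  assumes "0 \<le> r \<alpha>" and "0 \<le> w \<bullet> \<alpha> / (1 + t)"
  shows "(w \<bullet> \<alpha> / (1 + t) - paced_bid w t \<alpha>) * win_prob \<alpha> (paced_bid w t \<alpha>) = rent \<alpha> (w \<bullet> \<alpha> / (1 + t))"
proof (cases "r \<alpha> \<le> w \<bullet> \<alpha> / (1 + t)")
  case True
  then show ?thesis
    using surplus_le_rent rent_le_surplus_sigma_fn[OF True] assms
    by (simp add: paced_bid_def order_antisym)
qed (use assms in \<open>simp add: paced_bid_def win_prob_def rent_def\<close>)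

lemma prob_space_opponents: "prob_space opponents"
  by (intro prob_space_PiM G.prob_space_axioms)

lemma pair_sigma_finite_opponents: "pair_sigma_finite F opponents"
  by (intro pair_sigma_finite.intro F.sigma_finite_measure_axioms
      prob_space_imp_sigma_finite prob_space_opponents)

definition payoff :: "real^'d \<Rightarrow> real \<Rightarrow> (real^'d \<Rightarrow> real) \<Rightarrow> (real^'d) \<times> (nat \<Rightarrow> (real^'d) \<times> real) \<Rightarrow> real" where
  "payoff w t b = (\<lambda>(\<alpha>, \<theta>s). (w \<bullet> \<alpha> - (1 + t) * b \<alpha>) *
     (if b \<alpha> \<ge> Max (insert (r \<alpha>) ((\<lambda>i. beta_fn n G r \<mu> (\<theta>s i) \<alpha>) ` {..<n - 1})) then 1 else 0))"

lemma exp_payoff_eq_integral_payoff: "exp_payoff n F G r \<mu> w t b = integral\<^sup>L (F \<Otimes>\<^sub>M opponents) (payoff w t b)"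
  by (simp add: exp_payoff_def payoff_def)

context
  fixes w :: "real^'d" and t \<omega> :: real
  assumes t_nonneg: "0 \<le> t"
    and value_bounded: "AE \<alpha> in F. 0 \<le> w \<bullet> \<alpha> \<and> w \<bullet> \<alpha> \<le> \<omega>"
    and r_nonneg: "AE \<alpha> in F. 0 \<le> r \<alpha>"
begin

lemma integral_payoff_opponents:
  "(\<integral>\<theta>s. payoff w t b (\<alpha>, \<theta>s) \<partial>opponents) = (1 + t) * ((w \<bullet> \<alpha> / (1 + t) - b \<alpha>) * win_prob \<alpha> (b \<alpha>))"
proof -
  have "(\<integral>\<theta>s. payoff w t b (\<alpha>, \<theta>s) \<partial>opponents) = (w \<bullet> \<alpha> - (1 + t) * b \<alpha>) * win_prob \<alpha> (b \<alpha>)"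
    unfolding payoff_def prod.case by (rule integral_opponents)
  also have "\<dots> = (1 + t) * ((w \<bullet> \<alpha> / (1 + t) - b \<alpha>) * win_prob \<alpha> (b \<alpha>))"
    using t_nonneg by (simp add: field_simps)
  finally show ?thesis .
qed

lemma integrable_rent: "integrable F (\<lambda>\<alpha>. rent \<alpha> (w \<bullet> \<alpha> / (1 + t)))"
proof (rule F.integrable_const_bound[where B=\<omega>])
  show "AE \<alpha> in F. norm (rent \<alpha> (w \<bullet> \<alpha> / (1 + t))) \<le> \<omega>"
    using value_bounded r_nonneg
  proof eventually_elim
    case (elim \<alpha>)
    interpret shading "Hcdf n G \<mu> \<alpha>" by (rule shading_Hcdf)
    have "w \<bullet> \<alpha> / (1 + t) \<le> w \<bullet> \<alpha>"
      using elim t_nonneg by (simp add: divide_le_eq mult_le_cancel_left1)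
    moreover have "integral {r \<alpha>..v} (Hcdf n G \<mu> \<alpha>) \<le> v - r \<alpha>"
      if "r \<alpha> \<le> v" for v
    proof -
      have "integral {r \<alpha>..v} (Hcdf n G \<mu> \<alpha>) \<le> (v - r \<alpha>) * Hcdf n G \<mu> \<alpha> v"
        by (rule mono_integral_le[OF mono_H that])
      also have "\<dots> \<le> v - r \<alpha>"
        using that by (intro mult_left_le) (simp_all add: Hcdf_eq power_le_one)
      finally show ?thesis .
    qed
    ultimately show ?case
      using elim rent_nonneg[of \<alpha> "w \<bullet> \<alpha> / (1 + t)"] by (fastforce simp: rent_def)
  qed
  have "(\<lambda>\<alpha>. (\<alpha>, w \<bullet> \<alpha> / (1 + t))) \<in> F \<rightarrow>\<^sub>M F \<Otimes>\<^sub>M borel" by measurable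
  from measurable_compose[OF this measurable_integral_Hcdf]
  have [measurable]: "(\<lambda>\<alpha>. integral {r \<alpha>..w \<bullet> \<alpha> / (1 + t)} (Hcdf n G \<mu> \<alpha>)) \<in> borel_measurable F"
    by simp
  show "(\<lambda>\<alpha>. rent \<alpha> (w \<bullet> \<alpha> / (1 + t))) \<in> borel_measurable F"
    unfolding rent_def by measurable
qed

lemma exp_payoff_le: "exp_payoff n F G r \<mu> w t b \<le> (1 + t) * (\<integral>\<alpha>. rent \<alpha> (w \<bullet> \<alpha> / (1 + t)) \<partial>F)"
proof (cases "integrable (F \<Otimes>\<^sub>M opponents) (payoff w t b)")
  case False
  then show ?thesis
    using t_nonneg rent_nonneg
    by (simp add: exp_payoff_eq_integral_payoff not_integrable_integral_eq integral_nonneg_AE)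
next
  case True
  interpret pair_sigma_finite F opponents by (rule pair_sigma_finite_opponents)
  have "exp_payoff n F G r \<mu> w t b = (\<integral>\<alpha>. (\<integral>\<theta>s. payoff w t b (\<alpha>, \<theta>s) \<partial>opponents) \<partial>F)"
    unfolding exp_payoff_eq_integral_payoff by (rule integral_fst'[OF True, symmetric])
  also have "\<dots> \<le> (\<integral>\<alpha>. (1 + t) * rent \<alpha> (w \<bullet> \<alpha> / (1 + t)) \<partial>F)"
  proof (rule integral_mono)
    show "(\<integral>\<theta>s. payoff w t b (\<alpha>, \<theta>s) \<partial>opponents) \<le> (1 + t) * rent \<alpha> (w \<bullet> \<alpha> / (1 + t))" for \<alpha>
      unfolding integral_payoff_opponents using surplus_le_rent t_nonneg by (intro mult_left_mono) auto
  qed (use integrable_fst'[OF True] integrable_rent in auto)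
  finally show ?thesis by simp
qed

lemma integrable_payoff_paced_bid: "integrable (F \<Otimes>\<^sub>M opponents) (payoff w t (paced_bid w t))"
proof -
  interpret opponents: prob_space opponents by (rule prob_space_opponents)
  interpret pair_sigma_finite F opponents by (rule pair_sigma_finite_opponents)
  let ?g = "\<lambda>\<alpha>. \<bar>w \<bullet> \<alpha> - (1 + t) * paced_bid w t \<alpha>\<bar>"
  have "integrable F ?g"
  proof (rule F.integrable_const_bound[where B=\<omega>])
    show "AE \<alpha> in F. norm (?g \<alpha>) \<le> \<omega>"
      using value_bounded
    proof eventually_elim
      case (elim \<alpha>)
      interpret shading "Hcdf n G \<mu> \<alpha>" by (rule shading_Hcdf)
      have "paced_bid w t \<alpha> \<le> w \<bullet> \<alpha> / (1 + t)"
        using elim t_nonneg shade_le[of "r \<alpha>" "w \<bullet> \<alpha> / (1 + t)"]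
        by (auto simp: paced_bid_def sigma_fn_eq_shade)
      then have "(1 + t) * paced_bid w t \<alpha> \<le> w \<bullet> \<alpha>"
        using t_nonneg by (simp add: le_divide_eq mult.commute)
      moreover have "0 \<le> (1 + t) * paced_bid w t \<alpha>"
        using t_nonneg paced_bid_nonneg[of w t \<alpha>] by simp
      ultimately show ?case using elim by simp
    qed
  qed measurable
  moreover have "payoff w t (paced_bid w t) \<in> borel_measurable (F \<Otimes>\<^sub>M opponents)"
    unfolding payoff_def by measurable
  moreover have "\<bar>payoff w t (paced_bid w t) (\<alpha>, \<theta>s)\<bar> \<le> ?g \<alpha>" for \<alpha> \<theta>s
    by (simp add: payoff_def abs_mult)
  ultimately show ?thesis
    by (intro integrable_bounded_by_fst opponents.finite_measure_axioms)
qed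

lemma exp_payoff_paced_bid:
  "exp_payoff n F G r \<mu> w t (paced_bid w t) = (1 + t) * (\<integral>\<alpha>. rent \<alpha> (w \<bullet> \<alpha> / (1 + t)) \<partial>F)"
proof -
  interpret pair_sigma_finite F opponents by (rule pair_sigma_finite_opponents)
  note integrable = integrable_payoff_paced_bid
  have "exp_payoff n F G r \<mu> w t (paced_bid w t)
      = (\<integral>\<alpha>. (\<integral>\<theta>s. payoff w t (paced_bid w t) (\<alpha>, \<theta>s) \<partial>opponents) \<partial>F)"
    unfolding exp_payoff_eq_integral_payoff by (rule integral_fst'[OF integrable, symmetric])
  also have "\<dots> = (\<integral>\<alpha>. (1 + t) * rent \<alpha> (w \<bullet> \<alpha> / (1 + t)) \<partial>F)"
  proof (rule integral_cong_AE)
    show "AE \<alpha> in F. (\<integral>\<theta>s. payoff w t (paced_bid w t) (\<alpha>, \<theta>s) \<partial>opponents)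
        = (1 + t) * rent \<alpha> (w \<bullet> \<alpha> / (1 + t))"
      using value_bounded r_nonneg
    proof eventually_elim
      case (elim \<alpha>)
      have "0 \<le> w \<bullet> \<alpha> / (1 + t)" using elim t_nonneg by simp
      then show ?case
        unfolding integral_payoff_opponents using surplus_paced_bid[OF elim(2)] by simp
    qed
  qed (use integrable_fst'[OF integrable] integrable_rent in auto)
  finally show ?thesis by simp
qed

end

end

lemma inner_vec_nonneg:
  fixes x y :: "real^'n"
  assumes "\<And>i. 0 \<le> x $ i" and "\<And>i. 0 \<le> y $ i"
  shows "0 \<le> x \<bullet> y"
  using assms unfolding inner_vec_def by (intro sum_nonneg mult_nonneg_nonneg) auto

theorem mainTheorem4:
  fixes n :: nat and U Bmin \<omega> :: real
    and A :: "(real^'d) set"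
    and F :: "(real^'d) measure" and f :: "real^'d \<Rightarrow> ennreal"
    and G :: "((real^'d) \<times> real) measure" and g :: "(real^'d) \<times> real \<Rightarrow> ennreal"
    and r :: "real^'d \<Rightarrow> real"
    and \<mu> :: "(real^'d) \<times> real \<Rightarrow> real"
    and w :: "real^'d" and B t :: real
  assumes n2: "n \<ge> 2" and d2: "CARD('d) \<ge> 2"
    and U_pos: "U > 0" and Bmin_pos: "Bmin > 0"
    and A_meas: "A \<in> sets lebesgue" and A_pos: "A \<subseteq> {\<alpha>. \<forall>i. 0 < \<alpha> $ i}"
    and f_meas: "f \<in> borel_measurable lebesgue" and F_def: "F = density lebesgue f"
    and F_prob: "prob_space F" and F_A: "emeasure F A = 1"
    and g_meas: "g \<in> borel_measurable lebesgue" and G_def: "G = density lebesgue g"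
    and G_prob: "prob_space G" and G_Theta: "emeasure G (Theta U Bmin) = 1"
    and omega_pos: "\<omega> > 0"
    and omega_bound: "\<forall>v\<in>Theta_w U. \<forall>\<alpha>\<in>A. v \<bullet> \<alpha> \<le> \<omega>"
    and r_meas: "r \<in> borel_measurable lebesgue" and r_pos: "\<forall>\<alpha>\<in>A. r \<alpha> > 0"
    and mu_meas: "\<mu> \<in> borel_measurable lebesgue" and mu_nonneg: "\<forall>\<theta>\<in>Theta U Bmin. \<mu> \<theta> \<ge> 0"
    and wB: "(w, B) \<in> Theta U Bmin" and t_nonneg: "t \<ge> 0"
  shows "(SUP b \<in> {b. b \<in> borel_measurable lebesgue \<and> (\<forall>\<alpha>. 0 \<le> b \<alpha>)}.
            exp_payoff n F G r \<mu> w t b) + t * B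
         = q_fn n F G r \<mu> w B t"
proof -
  interpret paced_auction F G n r \<mu>
    using F_prob G_prob n2 r_meas mu_meas
    by (simp add: paced_auction_def paced_auction_axioms_def F_def G_def)
  have w: "w \<in> Theta_w U" using wB by (simp add: Theta_def Theta_w_def)
  have "0 \<le> w \<bullet> \<alpha>" if "\<alpha> \<in> A" for \<alpha>
    using that w A_pos unfolding Theta_w_def by (intro inner_vec_nonneg) (auto intro: less_imp_le)
  moreover have "AE \<alpha> in F. \<alpha> \<in> A"
    using F_A by (intro F.AE_prob_1) (simp add: F.emeasure_eq_measure)
  ultimately have value_bounded: "AE \<alpha> in F. 0 \<le> w \<bullet> \<alpha> \<and> w \<bullet> \<alpha> \<le> \<omega>"
    and r_nonneg: "AE \<alpha> in F. 0 \<le> r \<alpha>"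
    using w omega_bound r_pos by (auto elim!: eventually_mono intro: less_imp_le)
  let ?V = "(1 + t) * (\<integral>\<alpha>. rent \<alpha> (w \<bullet> \<alpha> / (1 + t)) \<partial>F)"
  have "paced_bid w t \<in> borel_measurable lebesgue"
    using measurable_paced_bid by (simp add: measurable_cong_sets[OF sets_F refl])
  then have "(SUP b \<in> {b. b \<in> borel_measurable lebesgue \<and> (\<forall>\<alpha>. 0 \<le> b \<alpha>)}. exp_payoff n F G r \<mu> w t b) = ?V"
    using exp_payoff_paced_bid[OF t_nonneg value_bounded r_nonneg] paced_bid_nonneg
      exp_payoff_le[OF t_nonneg value_bounded r_nonneg]
    by (intro cSup_eq_maximum) (auto intro!: image_eqI[where x="paced_bid w t"])
  then show ?thesis by (simp add: q_fn_def rent_def)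
qed

end
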